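(* Let $(M,d)$ be a compact metric space, $\varphi:M\to M$ continuous, and let $f\in B(M)$ be such that for some fixed $n\ge1$, $\epsilon>0$, $\alpha\ge0$, $$\sup_{x\in M}\sup_{y\in B_n(x,\epsilon)}|f(y)-f(x)|\le\alpha.$$ Then there exists a continuous function $g:M\to\mathbb R$ with $\|f-g\|_\infty\le\alpha$.
   Context: $B(M)$: bounded Borel real functions, $\|f\|_\infty=\sup|f|$; $B_n(x,\epsilon)=\{y\in M:d(\varphi^k(y),\varphi^k(x))<\epsilon,\ 0\le k\le n-1\}$. *)

theory Defs
  imports "HOL-Analysis.Analysis"
begin

definition bowen_ball :: "('a::metric_space \<Rightarrow> 'a) \<Rightarrow> 'a set \<Rightarrow> nat \<Rightarrow> 'a \<Rightarrow> real \<Rightarrow> 'a set" where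
  "bowen_ball \<phi> M n x \<epsilon> = {y \<in> M. \<forall>k<n. dist ((\<phi> ^^ k) y) ((\<phi> ^^ k) x) < \<epsilon>}"

end

theory Submission
  imports Defs
begin

text \<open>For every centre \<open>c\<close> the product of the hat functions
  \<open>max 0 (\<epsilon> - dist (\<phi>\<^sup>k y) (\<phi>\<^sup>k c))\<close>, \<open>k < n\<close>, is a continuous bump that is positive exactly
  on the Bowen ball \<open>B\<^sub>n(c,\<epsilon>)\<close>. By compactness finitely many of these balls cover \<open>M\<close>,
  and the average of the values \<open>f c\<close> weighted by the bumps is a continuous function.
  At every point \<open>x\<close> only centres \<open>c\<close> with \<open>x \<in> B\<^sub>n(c,\<epsilon>)\<close> contribute, and for those
  \<open>\<bar>f x - f c\<bar> \<le> \<alpha>\<close>, so the average stays within \<open>\<alpha>\<close> of \<open>f x\<close>.\<close>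

lemma funpow_image_subset:
  assumes "\<phi> ` M \<subseteq> M"
  shows "(\<phi> ^^ k) ` M \<subseteq> M"
  by (induction k) (use assms in auto)

lemma continuous_on_funpow:
  assumes "continuous_on M \<phi>" "\<phi> ` M \<subseteq> M"
  shows "continuous_on M (\<phi> ^^ k)"
proof (induction k)
  case 0
  then show ?case by simp
next
  case (Suc k)
  have "continuous_on M (\<phi> \<circ> (\<phi> ^^ k))"
    using continuous_on_compose[OF Suc.IH]
      continuous_on_subset[OF assms(1) funpow_image_subset[OF assms(2)]] by blast
  then show ?case by simp
qed

lemma finite_subcover_of_positivity:
  fixes \<psi> :: "'i \<Rightarrow> 'a::topological_space \<Rightarrow> real"
  assumes "compact M"
    and "\<And>c. c \<in> I \<Longrightarrow> continuous_on M (\<psi> c)"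
    and "\<And>y. y \<in> M \<Longrightarrow> \<exists>c\<in>I. \<psi> c y > 0"
  obtains C where "C \<subseteq> I" "finite C" "\<And>y. y \<in> M \<Longrightarrow> \<exists>c\<in>C. \<psi> c y > 0"
proof -
  have "\<exists>A. open A \<and> A \<inter> M = \<psi> c -` {0<..} \<inter> M" if "c \<in> I" for c
    using assms(2)[OF that, unfolded continuous_on_open_invariant, rule_format, OF open_greaterThan] .
  then obtain A where A: "\<And>c. c \<in> I \<Longrightarrow> open (A c) \<and> A c \<inter> M = \<psi> c -` {0<..} \<inter> M"
    by metis
  have A_iff: "y \<in> A c \<longleftrightarrow> \<psi> c y > 0" if "c \<in> I" "y \<in> M" for c y
    using A[OF that(1)] that(2) by blast
  have "M \<subseteq> (\<Union>c\<in>I. A c)"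
    using A_iff assms(3) by blast
  then obtain C where C: "C \<subseteq> I" "finite C" "M \<subseteq> (\<Union>c\<in>C. A c)"
    using compactE_image[OF assms(1), of I A] A by metis
  have "\<exists>c\<in>C. \<psi> c y > 0" if "y \<in> M" for y
  proof -
    from C(3) that obtain c where "c \<in> C" "y \<in> A c" by blast
    then show ?thesis
      using A_iff C(1) that by blast
  qed
  with C(1,2) show ?thesis by (rule that)
qed

lemma continuous_weighted_average_approx:
  fixes \<psi> :: "'i \<Rightarrow> 'a::topological_space \<Rightarrow> real" and f :: "'a \<Rightarrow> real" and v :: "'i \<Rightarrow> real"
  assumes "finite C"
    and cont: "\<And>c. c \<in> C \<Longrightarrow> continuous_on M (\<psi> c)"
    and nonneg: "\<And>c y. c \<in> C \<Longrightarrow> y \<in> M \<Longrightarrow> \<psi> c y \<ge> 0"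
    and cover: "\<And>y. y \<in> M \<Longrightarrow> \<exists>c\<in>C. \<psi> c y > 0"
    and close: "\<And>c y. c \<in> C \<Longrightarrow> y \<in> M \<Longrightarrow> \<psi> c y > 0 \<Longrightarrow> \<bar>f y - v c\<bar> \<le> \<alpha>"
  shows "\<exists>g. continuous_on M g \<and> (\<forall>y\<in>M. \<bar>f y - g y\<bar> \<le> \<alpha>)"
proof -
  define S where "S y = (\<Sum>c\<in>C. \<psi> c y)" for y
  define g where "g y = (\<Sum>c\<in>C. \<psi> c y * v c) / S y" for y
  have S_pos: "S y > 0" if "y \<in> M" for y
  proof -
    from cover[OF that] obtain c where c: "c \<in> C" "\<psi> c y > 0" ..
    have "\<psi> c y \<le> S y"
      unfolding S_def using \<open>finite C\<close> c(1) nonneg that by (intro member_le_sum) auto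
    with c(2) show ?thesis by simp
  qed
  have "continuous_on M S"
    unfolding S_def using cont by (intro continuous_intros)
  then have "continuous_on M g"
    unfolding g_def using cont S_pos by (intro continuous_intros) fastforce+
  moreover have "\<bar>f y - g y\<bar> \<le> \<alpha>" if y: "y \<in> M" for y
  proof -
    have "(\<Sum>c\<in>C. \<psi> c y * (f y - v c)) = f y * S y - (\<Sum>c\<in>C. \<psi> c y * v c)"
      unfolding S_def by (simp add: right_diff_distrib sum_subtractf sum_distrib_left mult.commute)
    then have "f y - g y = (\<Sum>c\<in>C. \<psi> c y * (f y - v c)) / S y"
      using S_pos[OF y] by (simp add: g_def diff_divide_distrib)
    then have "\<bar>f y - g y\<bar> = \<bar>\<Sum>c\<in>C. \<psi> c y * (f y - v c)\<bar> / S y"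
      using S_pos[OF y] by simp
    also have "\<dots> \<le> (\<Sum>c\<in>C. \<psi> c y * \<alpha>) / S y"
    proof (intro divide_right_mono order.trans[OF sum_abs] sum_mono)
      fix c assume c: "c \<in> C"
      show "\<bar>\<psi> c y * (f y - v c)\<bar> \<le> \<psi> c y * \<alpha>"
      proof (cases "\<psi> c y > 0")
        case True
        then show ?thesis
          using close[OF c y] by (simp add: abs_mult mult_left_mono)
      next
        case False
        then show ?thesis using nonneg[OF c y] by simp
      qed
    qed (use S_pos[OF y] in auto)
    also have "\<dots> = \<alpha>"
      using S_pos[OF y] unfolding S_def by (simp add: sum_distrib_right[symmetric])
    finally show ?thesis .
  qed
  ultimately show ?thesis by blast
qed

definition bowen_bump :: "('a::metric_space \<Rightarrow> 'a) \<Rightarrow> nat \<Rightarrow> real \<Rightarrow> 'a \<Rightarrow> 'a \<Rightarrow> real" where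
  "bowen_bump \<phi> n \<epsilon> c y = (\<Prod>k<n. max 0 (\<epsilon> - dist ((\<phi> ^^ k) y) ((\<phi> ^^ k) c)))"

lemma continuous_on_bowen_bump:
  assumes "continuous_on M \<phi>" "\<phi> ` M \<subseteq> M"
  shows "continuous_on M (bowen_bump \<phi> n \<epsilon> c)"
  unfolding bowen_bump_def
  by (intro continuous_intros continuous_on_funpow[OF assms])

lemma bowen_bump_nonneg: "bowen_bump \<phi> n \<epsilon> c y \<ge> 0"
  unfolding bowen_bump_def by (intro prod_nonneg) auto

lemma bowen_bump_pos_iff:
  assumes "y \<in> M"
  shows "bowen_bump \<phi> n \<epsilon> c y > 0 \<longleftrightarrow> y \<in> bowen_ball \<phi> M n c \<epsilon>"
proof
  assume "bowen_bump \<phi> n \<epsilon> c y > 0"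
  then have "(\<Prod>k<n. max 0 (\<epsilon> - dist ((\<phi> ^^ k) y) ((\<phi> ^^ k) c))) \<noteq> 0"
    unfolding bowen_bump_def by (rule less_imp_neq[THEN not_sym])
  then have "\<forall>k<n. max 0 (\<epsilon> - dist ((\<phi> ^^ k) y) ((\<phi> ^^ k) c)) \<noteq> 0"
    by simp
  then show "y \<in> bowen_ball \<phi> M n c \<epsilon>"
    using assms by (auto simp: bowen_ball_def max_def split: if_splits)
next
  assume "y \<in> bowen_ball \<phi> M n c \<epsilon>"
  then show "bowen_bump \<phi> n \<epsilon> c y > 0"
    unfolding bowen_bump_def by (intro prod_pos) (auto simp: bowen_ball_def)
qed

theorem lemma6p4:
  fixes M :: "'a::metric_space set" and \<phi> :: "'a \<Rightarrow> 'a" and f :: "'a \<Rightarrow> real"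
    and n :: nat and \<epsilon> \<alpha> :: real
  assumes "compact M"
    and "continuous_on M \<phi>" and "\<phi> ` M \<subseteq> M"
    and "f \<in> borel_measurable (restrict_space borel M)" and "bounded (f ` M)"
    and "n \<ge> 1" and "\<epsilon> > 0" and "\<alpha> \<ge> 0"
    and "\<forall>x\<in>M. \<forall>y\<in>bowen_ball \<phi> M n x \<epsilon>. \<bar>f y - f x\<bar> \<le> \<alpha>"
  shows "\<exists>g. continuous_on M g \<and> (\<forall>x\<in>M. \<bar>f x - g x\<bar> \<le> \<alpha>)"
proof -
  let ?\<psi> = "bowen_bump \<phi> n \<epsilon>"
  have cont: "continuous_on M (?\<psi> c)" for c
    using continuous_on_bowen_bump[OF assms(2,3)] .
  have centre: "?\<psi> x x > 0" if "x \<in> M" for x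
    using that \<open>\<epsilon> > 0\<close> by (simp add: bowen_bump_pos_iff bowen_ball_def)
  then have cover: "\<exists>c\<in>M. ?\<psi> c y > 0" if "y \<in> M" for y
    using that by blast
  obtain C where C: "C \<subseteq> M" "finite C" "\<And>y. y \<in> M \<Longrightarrow> \<exists>c\<in>C. ?\<psi> c y > 0"
    using finite_subcover_of_positivity[OF assms(1) cont cover] by blast
  show ?thesis
  proof (rule continuous_weighted_average_approx[OF C(2) cont bowen_bump_nonneg C(3)])
    fix c y assume "c \<in> C" "y \<in> M" "?\<psi> c y > 0"
    then have "y \<in> bowen_ball \<phi> M n c \<epsilon>"
      by (simp add: bowen_bump_pos_iff)
    with \<open>c \<in> C\<close> show "\<bar>f y - f c\<bar> \<le> \<alpha>"
      using assms(9) C(1) by blast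
  qed
qed

end
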